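(* There exist bounding sequences $(n_k^-)_{k\in\omega},(n_k^+)_{k\in\omega}$ and a modified suitable family $\mathcal{F}=\{(a_\alpha,d_\alpha,b_\alpha,g_\alpha,c_\alpha,h_\alpha,e_\alpha,u_\alpha):\alpha\in2^\omega\}$ with respect to them, indexed by $2^\omega$ (so of size continuum, with distinct indices giving distinct tuples).
   Context: Slalom notation: for $c,h\in\omega^\omega$, $c^{\triangledown h}(n)=|[c(n)]^{\le h(n)}|$ (number of subsets of $\{0,\dots,c(n)-1\}$ of size $\le h(n)$). Auxiliary functions: $g_{c,h}(k)=\lfloor\log_2c(n)\rfloor$ for $k\in J_n$, where $\langle J_n\rangle$ is the partition of $\omega$ into consecutive intervals with $|J_n|=h(n)$; $f_{b,g}(k)=\sum_{l\le n}\lceil\log_2b(l)\rceil$ for $k\in I_n$, where $\langle I_n\rangle$ is the consecutive interval partition with $|I_n|=g(n)$; for increasing $f$, $e_f(k)=\min\{n:k<f(2^n)\}$. Bounding sequences: $(n_k^-),(n_k^+)$ natural numbers $\ge2$ with $n_k^-n_k^+<n_{k+1}^-$ for all $k$ and $\lim_k\log_{n_k^-}n_k^+=\infty$. Modified suitable family w.r.t. them: a family of tuples of functions in $\omega^\omega$ ($a,d,b,g,c,h,u$ increasing, $e$ nondecreasing) such that for all $\alpha\in A$: (S1) for all $k$, each of $a_\alpha(k),d_\alpha(k),b_\alpha(k),g_\alpha(k),b_\alpha^{\triangledown g_\alpha}(k),b_\alpha(k)/g_\alpha(k),h_\alpha(k),c_\alpha^{\triangledown h_\alpha}(k)$ lies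 in $[n_k^-,n_k^+]$; (S2) $h_\alpha<c_\alpha$ pointwise and $\limsup_k\frac{1}{d_\alpha(k)}\log_{d_\alpha(k)}(h_\alpha(k)+1)=\infty$; (S3) $b_\alpha/g_\alpha\ge d_\alpha$ pointwise; (S4) $a_\alpha\ge b_\alpha^{\triangledown g_\alpha}$ pointwise; (S7) for all $\beta\in A$, $\beta\ne\alpha$: $\lim_k\min\{c_\beta^{\triangledown h_\beta}(k)/d_\alpha(k),\ a_\alpha(k)/d_\beta(k)\}=0$; (MS1) $e_\alpha=e_{u_\alpha}$; (MS2) $e_\alpha(g_{c_\alpha,h_\alpha}(k))\ge2\log_2k$ for all $k\ge1$; (MS3) $f_{b_\alpha,g_\alpha}\le u_\alpha$ pointwise. *)

theory Defs
  imports Complex_Main "HOL-Library.Extended_Real"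
begin

definition slalom_count :: "(nat \<Rightarrow> nat) \<Rightarrow> (nat \<Rightarrow> nat) \<Rightarrow> nat \<Rightarrow> nat" where
  "slalom_count c h n = card {A. A \<subseteq> {..<c n} \<and> card A \<le> h n}"

text \<open>Index n of the interval containing k, for the partition of the naturals into
  consecutive intervals J_0, J_1, ... with |J_n| = h n, i.e.
  J_n = [sum_{i<n} h i, sum_{i<=n} h i).\<close>
definition interval_index :: "(nat \<Rightarrow> nat) \<Rightarrow> nat \<Rightarrow> nat" where
  "interval_index h k = (LEAST n. k < (\<Sum>i\<le>n. h i))"

definition g_fun :: "(nat \<Rightarrow> nat) \<Rightarrow> (nat \<Rightarrow> nat) \<Rightarrow> nat \<Rightarrow> nat" where
  "g_fun c h k = nat \<lfloor>log 2 (real (c (interval_index h k)))\<rfloor>"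

definition f_fun :: "(nat \<Rightarrow> nat) \<Rightarrow> (nat \<Rightarrow> nat) \<Rightarrow> nat \<Rightarrow> nat" where
  "f_fun b g k = (\<Sum>l\<le>interval_index g k. nat \<lceil>log 2 (real (b l))\<rceil>)"

definition e_fun :: "(nat \<Rightarrow> nat) \<Rightarrow> nat \<Rightarrow> nat" where
  "e_fun f k = (LEAST n. k < f (2 ^ n))"

definition bounding_sequences :: "(nat \<Rightarrow> nat) \<Rightarrow> (nat \<Rightarrow> nat) \<Rightarrow> bool" where
  "bounding_sequences nm np \<longleftrightarrow>
     (\<forall>k. 2 \<le> nm k \<and> 2 \<le> np k \<and> nm k * np k < nm (Suc k)) \<and>
     filterlim (\<lambda>k. log (real (nm k)) (real (np k))) at_top sequentially"

definition mod_suitable_family ::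
  "(nat \<Rightarrow> nat) \<Rightarrow> (nat \<Rightarrow> nat) \<Rightarrow> 'i set \<Rightarrow>
   ('i \<Rightarrow> nat \<Rightarrow> nat) \<Rightarrow> ('i \<Rightarrow> nat \<Rightarrow> nat) \<Rightarrow> ('i \<Rightarrow> nat \<Rightarrow> nat) \<Rightarrow> ('i \<Rightarrow> nat \<Rightarrow> nat) \<Rightarrow>
   ('i \<Rightarrow> nat \<Rightarrow> nat) \<Rightarrow> ('i \<Rightarrow> nat \<Rightarrow> nat) \<Rightarrow> ('i \<Rightarrow> nat \<Rightarrow> nat) \<Rightarrow> ('i \<Rightarrow> nat \<Rightarrow> nat) \<Rightarrow> bool" where
  "mod_suitable_family nm np A a d b g c h e u \<longleftrightarrow>
    (\<forall>\<alpha>\<in>A.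
       \<comment> \<open>monotonicity\<close>
       strict_mono (a \<alpha>) \<and> strict_mono (d \<alpha>) \<and> strict_mono (b \<alpha>) \<and> strict_mono (g \<alpha>) \<and>
       strict_mono (c \<alpha>) \<and> strict_mono (h \<alpha>) \<and> strict_mono (u \<alpha>) \<and> mono (e \<alpha>) \<and>
       \<comment> \<open>(S1)\<close>
       (\<forall>k. nm k \<le> a \<alpha> k \<and> a \<alpha> k \<le> np k \<and>
            nm k \<le> d \<alpha> k \<and> d \<alpha> k \<le> np k \<and>
            nm k \<le> b \<alpha> k \<and> b \<alpha> k \<le> np k \<and>
            nm k \<le> g \<alpha> k \<and> g \<alpha> k \<le> np k \<and>
            nm k \<le> slalom_count (b \<alpha>) (g \<alpha>) k \<and> slalom_count (b \<alpha>) (g \<alpha>) k \<le> np k \<and>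
            real (nm k) \<le> real (b \<alpha> k) / real (g \<alpha> k) \<and>
            real (b \<alpha> k) / real (g \<alpha> k) \<le> real (np k) \<and>
            nm k \<le> h \<alpha> k \<and> h \<alpha> k \<le> np k \<and>
            nm k \<le> slalom_count (c \<alpha>) (h \<alpha>) k \<and> slalom_count (c \<alpha>) (h \<alpha>) k \<le> np k) \<and>
       \<comment> \<open>(S2)\<close>
       (\<forall>k. h \<alpha> k < c \<alpha> k) \<and>
       limsup (\<lambda>k. ereal (1 / real (d \<alpha> k) * log (real (d \<alpha> k)) (real (h \<alpha> k + 1)))) = \<infinity> \<and>
       \<comment> \<open>(S3)\<close>
       (\<forall>k. real (d \<alpha> k) \<le> real (b \<alpha> k) / real (g \<alpha> k)) \<and>
       \<comment> \<open>(S4)\<close>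
       (\<forall>k. slalom_count (b \<alpha>) (g \<alpha>) k \<le> a \<alpha> k) \<and>
       \<comment> \<open>(S7)\<close>
       (\<forall>\<beta>\<in>A. \<beta> \<noteq> \<alpha> \<longrightarrow>
          (\<lambda>k. min (real (slalom_count (c \<beta>) (h \<beta>) k) / real (d \<alpha> k))
                    (real (a \<alpha> k) / real (d \<beta> k))) \<longlonglongrightarrow> 0) \<and>
       \<comment> \<open>(MS1)\<close>
       e \<alpha> = e_fun (u \<alpha>) \<and>
       \<comment> \<open>(MS2)\<close>
       (\<forall>k\<ge>1. 2 * log 2 (real k) \<le> real (e \<alpha> (g_fun (c \<alpha>) (h \<alpha>) k))) \<and>
       \<comment> \<open>(MS3)\<close>
       (\<forall>k. f_fun (b \<alpha>) (g \<alpha>) k \<le> u \<alpha> k))"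

end

theory Submission
  imports Defs
begin

text \<open>Every branch alpha of the binary tree picks at coordinate k one of the 2^k levels
  p in [2^k, 2^(k+1)), namely the one coded by the prefix alpha|k. To each level p we attach
  a block of values N <= h <= g <= b < a <= c < u with base N = base p; the tower of bases
  grows so fast that the block at level p lies below base (p+1) by a factor p+2. The blocks
  of the levels of coordinate k fill the band [n_k^-, n_k^+]. Distinct branches eventually
  use distinct levels, and then the whole block of the lower one is negligible against the
  base of the higher one, which gives (S7). The remaining conditions are inequalities inside
  a single block.\<close>

lemma slalom_count_bounds:
  assumes "h n \<le> c n"
  shows "2 ^ h n \<le> slalom_count c h n" "slalom_count c h n \<le> 2 ^ c n"
proof -
  have sub_small: "Pow {..<h n} \<subseteq> {A. A \<subseteq> {..<c n} \<and> card A \<le> h n}"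
  proof
    fix A assume "A \<in> Pow {..<h n}"
    then have "card A \<le> card {..<h n}" by (intro card_mono) auto
    with \<open>A \<in> Pow {..<h n}\<close> assms show "A \<in> {A. A \<subseteq> {..<c n} \<and> card A \<le> h n}" by auto
  qed
  have sub_big: "{A. A \<subseteq> {..<c n} \<and> card A \<le> h n} \<subseteq> Pow {..<c n}" by auto
  have "card (Pow {..<h n}) \<le> card {A. A \<subseteq> {..<c n} \<and> card A \<le> h n}"
    using sub_small sub_big by (intro card_mono) (auto intro: finite_subset)
  then show "2 ^ h n \<le> slalom_count c h n" by (simp add: slalom_count_def card_Pow)
  have "card {A. A \<subseteq> {..<c n} \<and> card A \<le> h n} \<le> card (Pow {..<c n})"
    using sub_big by (intro card_mono) auto
  then show "slalom_count c h n \<le> 2 ^ c n" by (simp add: slalom_count_def card_Pow)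
qed

lemma less_sum_interval_index:
  assumes "\<And>i. 0 < h i"
  shows "k < (\<Sum>i\<le>interval_index h k. h i)"
  unfolding interval_index_def
proof (rule LeastI[of _ k])
  have "(\<Sum>i\<le>k. 1) \<le> (\<Sum>i\<le>k. h i)" using assms by (intro sum_mono) (simp add: Suc_le_eq)
  then show "k < (\<Sum>i\<le>k. h i)" by simp
qed

lemma interval_index_le: "k < (\<Sum>i\<le>n. h i) \<Longrightarrow> interval_index h k \<le> n"
  unfolding interval_index_def by (rule Least_le)

lemma interval_index_mono:
  "(\<And>i. 0 < h i) \<Longrightarrow> k \<le> k' \<Longrightarrow> interval_index h k \<le> interval_index h k'"
  using less_sum_interval_index[of h k'] by (intro interval_index_le) auto

lemma f_fun_mono:
  assumes "\<And>i. 0 < g i"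
  shows "mono (f_fun b g)"
proof (rule monoI)
  fix x y :: nat assume "x \<le> y"
  then have "interval_index g x \<le> interval_index g y" by (rule interval_index_mono[OF assms])
  then show "f_fun b g x \<le> f_fun b g y" unfolding f_fun_def by (intro sum_mono2) auto
qed

lemma less_e_fun:
  assumes "\<And>m. m \<le> f m"
  shows "m < f (2 ^ e_fun f m)"
  unfolding e_fun_def by (rule LeastI[of _ m]) (use assms[of "2 ^ m"] less_exp[of m] in linarith)

lemma mono_e_fun:
  assumes "\<And>m. m \<le> f m"
  shows "mono (e_fun f)"
proof (rule monoI)
  fix x y :: nat assume "x \<le> y"
  then have "x < f (2 ^ e_fun f y)" using less_e_fun[OF assms, of y] by linarith
  then show "e_fun f x \<le> e_fun f y" unfolding e_fun_def[of _ x] by (rule Least_le)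
qed

lemma sum_atMost_le_mult_last: "mono f \<Longrightarrow> (\<Sum>i\<le>n. f i) \<le> (n + 1) * (f n :: nat)"
  using sum_mono[of "{..n}" f "\<lambda>_. f n"] by (simp add: mono_def)

lemma nat_ceiling_log2_le: "1 \<le> b \<Longrightarrow> nat \<lceil>log 2 (real b)\<rceil> \<le> b"
proof -
  assume "1 \<le> b"
  have "real b < 2 ^ b" using less_exp[of b] by (metis of_nat_less_iff of_nat_numeral of_nat_power)
  then have "log 2 (real b) < real b"
    using \<open>1 \<le> b\<close> log_less_cancel_iff[of 2 "real b" "2 ^ b"] by (simp add: log_pow_cancel)
  then show ?thesis by simp
qed

section \<open>Blocks and the tower of bases\<close>

text \<open>The block at level p with base N = d. The exponents are tuned to the conditions:
  log_N h / N = p + 1 gives (S2), b / g = N gives (S3), and log_2 c = (p + 1) b + g dominates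
  u at k^2 for every k in the interval J_n of such a block, which gives (MS2).\<close>

definition h_of :: "nat \<Rightarrow> nat \<Rightarrow> nat" where "h_of p N = N ^ (N * (p + 1))"
definition g_of :: "nat \<Rightarrow> nat \<Rightarrow> nat" where "g_of p N = ((p + 1) * h_of p N) ^ 2"
definition b_of :: "nat \<Rightarrow> nat \<Rightarrow> nat" where "b_of p N = N * g_of p N"
definition a_of :: "nat \<Rightarrow> nat \<Rightarrow> nat" where "a_of p N = 2 ^ b_of p N"
definition c_exp :: "nat \<Rightarrow> nat \<Rightarrow> nat" where "c_exp p N = (p + 1) * b_of p N + g_of p N"
definition c_of :: "nat \<Rightarrow> nat \<Rightarrow> nat" where "c_of p N = 2 ^ c_exp p N"
definition u_of :: "nat \<Rightarrow> nat \<Rightarrow> nat" where "u_of p N = 2 ^ c_of p N"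

lemma block_chain:
  assumes "1 \<le> N"
  shows "N \<le> h_of p N" "h_of p N \<le> g_of p N" "g_of p N \<le> b_of p N" "b_of p N < a_of p N"
    "a_of p N \<le> c_of p N" "h_of p N < c_of p N" "c_of p N < u_of p N"
proof -
  show "N \<le> h_of p N" unfolding h_of_def using assms by (intro self_le_power) auto
  have "h_of p N \<le> (p + 1) * h_of p N" by simp
  also have "\<dots> \<le> ((p + 1) * h_of p N) ^ 2" by (simp add: power2_eq_square)
  finally show hg: "h_of p N \<le> g_of p N" by (simp add: g_of_def)
  show "g_of p N \<le> b_of p N" unfolding b_of_def using assms by simp
  show "b_of p N < a_of p N" unfolding a_of_def by (rule less_exp)
  show "a_of p N \<le> c_of p N" unfolding a_of_def c_of_def c_exp_def by (rule power_increasing) auto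
  have "g_of p N < 2 ^ g_of p N" by (rule less_exp)
  also have "\<dots> \<le> c_of p N" unfolding c_of_def c_exp_def by (rule power_increasing) auto
  finally show "h_of p N < c_of p N" using hg by linarith
  show "c_of p N < u_of p N" unfolding u_of_def by (rule less_exp)
qed

primrec base :: "nat \<Rightarrow> nat" where
  "base 0 = 2"
| "base (Suc p) = (p + 2) * base p * u_of p (base p)"

lemma base_ge_2: "2 \<le> base p"
proof (induction p)
  case (Suc p)
  have "2 * 1 * 1 \<le> (p + 2) * base p * u_of p (base p)"
    using Suc by (intro mult_le_mono) (auto simp: u_of_def)
  then show ?case by simp
qed simp

lemmas block_chain_base = block_chain[of "base p" p, OF order_trans[OF _ base_ge_2]] for p

lemma base_le_top: "base p \<le> u_of p (base p)"
  using block_chain_base[of p] by linarith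

lemma top_separated: "(p + 2) * u_of p (base p) \<le> base (Suc p)"
proof -
  have "(p + 2) * u_of p (base p) * 1 \<le> (p + 2) * u_of p (base p) * base p"
    using base_ge_2[of p] by (intro mult_le_mono2) simp
  then show ?thesis by (simp only: base.simps mult_1_right ac_simps)
qed

lemma strict_mono_base: "strict_mono base"
proof (rule strict_mono_Suc_iff[THEN iffD2], intro allI)
  fix p
  have "base p \<le> u_of p (base p)" by (rule base_le_top)
  also have "\<dots> < base (Suc p)" using top_separated[of p] base_ge_2[of p] by (simp add: u_of_def)
  finally show "base p < base (Suc p)" .
qed

lemma base_mono: "p \<le> q \<Longrightarrow> base p \<le> base q"
  using strict_mono_base by (simp add: strict_mono_less_eq)

lemma top_mono: "p \<le> q \<Longrightarrow> u_of p (base p) \<le> u_of q (base q)"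
proof (cases "p = q")
  case False
  assume "p \<le> q"
  then have "Suc p \<le> q" using False by simp
  have "u_of p (base p) \<le> base (Suc p)" by (rule order_trans[OF _ top_separated]) simp
  also have "\<dots> \<le> base q" using \<open>Suc p \<le> q\<close> by (rule base_mono)
  also have "\<dots> \<le> u_of q (base q)" by (rule base_le_top)
  finally show ?thesis .
qed simp

lemma top_div_base_le:
  assumes "p < q" "k \<le> p"
  shows "real (u_of p (base p)) / real (base q) \<le> inverse (real (Suc k))"
proof -
  have "(k + 1) * u_of p (base p) \<le> (p + 2) * u_of p (base p)"
    using assms by (intro mult_le_mono1) simp
  also have "\<dots> \<le> base (Suc p)" by (rule top_separated)
  also have "\<dots> \<le> base q" using assms by (intro base_mono) simp
  finally have "real (Suc k) * real (u_of p (base p)) \<le> real (base q)"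
    by (metis Suc_eq_plus1 of_nat_le_iff of_nat_mult)
  moreover have "0 < real (base q)" using base_ge_2[of q] by simp
  ultimately show ?thesis by (simp add: field_simps)
qed

section \<open>Levels coded by binary prefixes\<close>

definition prefix_code :: "(nat \<Rightarrow> bool) \<Rightarrow> nat \<Rightarrow> nat" where
  "prefix_code \<alpha> k = (\<Sum>i<k. if \<alpha> i then 2 ^ i else 0)"

lemma prefix_code_Suc: "prefix_code \<alpha> (Suc k) = prefix_code \<alpha> k + (if \<alpha> k then 2 ^ k else 0)"
  by (simp add: prefix_code_def)

lemma prefix_code_less: "prefix_code \<alpha> k < 2 ^ k"
  by (induction k) (simp_all add: prefix_code_def prefix_code_Suc[unfolded prefix_code_def])

lemma prefix_code_eqD: "prefix_code \<alpha> k = prefix_code \<beta> k \<Longrightarrow> i < k \<Longrightarrow> \<alpha> i = \<beta> i"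
proof (induction k)
  case (Suc k)
  let ?bit = "\<lambda>\<gamma>. if \<gamma> k then 1 else 0 :: nat"
  have split: "prefix_code \<gamma> (Suc k) = prefix_code \<gamma> k + 2 ^ k * ?bit \<gamma>" for \<gamma>
    by (simp add: prefix_code_Suc)
  have "prefix_code \<gamma> (Suc k) div 2 ^ k = ?bit \<gamma>" "prefix_code \<gamma> (Suc k) mod 2 ^ k = prefix_code \<gamma> k"
    for \<gamma> using prefix_code_less[of \<gamma> k] unfolding split by simp_all
  with Suc.prems(1) have "?bit \<alpha> = ?bit \<beta>" "prefix_code \<alpha> k = prefix_code \<beta> k" by metis+
  then show ?case using Suc by (cases "i = k") (auto split: if_splits)
qed simp

definition level :: "(nat \<Rightarrow> bool) \<Rightarrow> nat \<Rightarrow> nat" where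
  "level \<alpha> k = 2 ^ k + prefix_code \<alpha> k"

lemma level_bounds: "2 ^ k \<le> level \<alpha> k" "level \<alpha> k \<le> 2 ^ Suc k - 1"
  using prefix_code_less[of \<alpha> k] by (simp_all add: level_def)

lemma less_level: "k < level \<alpha> k"
  using level_bounds(1)[of k \<alpha>] less_exp[of k] by linarith

lemma level_neq: "\<alpha> i \<noteq> \<beta> i \<Longrightarrow> i < k \<Longrightarrow> level \<alpha> k \<noteq> level \<beta> k"
  unfolding level_def using prefix_code_eqD by fastforce

section \<open>The bounding sequences\<close>

definition band_lo :: "nat \<Rightarrow> nat" where "band_lo k = base (2 ^ k)"
definition band_hi :: "nat \<Rightarrow> nat" where "band_hi k = u_of (2 ^ Suc k - 1) (base (2 ^ Suc k - 1))"

lemma block_in_band: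
  assumes "base (level \<alpha> k) \<le> V" "V \<le> u_of (level \<alpha> k) (base (level \<alpha> k))"
  shows "band_lo k \<le> V \<and> V \<le> band_hi k"
proof
  show "band_lo k \<le> V"
    unfolding band_lo_def using base_mono[OF level_bounds(1)] assms(1) by (rule order_trans)
  show "V \<le> band_hi k"
    unfolding band_hi_def using assms(2) top_mono[OF level_bounds(2)] by (rule order_trans)
qed

lemma band_step: "band_lo k * band_hi k < band_lo (Suc k)"
proof -
  define q :: nat where "q = 2 ^ Suc k - 1"
  have "band_lo k \<le> base q" unfolding band_lo_def q_def by (rule base_mono) simp
  then have "band_lo k * band_hi k \<le> base q * u_of q (base q)" by (simp add: band_hi_def q_def)
  also have "\<dots> < (q + 2) * base q * u_of q (base q)"
    using base_ge_2[of q] by (simp add: u_of_def)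
  also have "\<dots> = base (Suc q)" by simp
  also have "Suc q = 2 ^ Suc k" by (simp add: q_def)
  finally show ?thesis by (simp add: band_lo_def)
qed

lemma strict_mono_in_band:
  assumes "\<And>k. band_lo k \<le> f k \<and> f k \<le> band_hi k"
  shows "strict_mono f"
proof (rule strict_mono_Suc_iff[THEN iffD2], intro allI)
  fix k
  have "f k \<le> band_hi k" using assms by blast
  also have "\<dots> \<le> band_lo k * band_hi k" using base_ge_2[of "2 ^ k"] by (simp add: band_lo_def)
  also have "\<dots> < band_lo (Suc k)" by (rule band_step)
  also have "\<dots> \<le> f (Suc k)" using assms by blast
  finally show "f k < f (Suc k)" .
qed

lemma band_lo_power_le_band_hi: "band_lo k ^ k \<le> band_hi k"
proof -
  define q :: nat where "q = 2 ^ Suc k - 1"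
  have "k \<le> q" using less_exp[of "Suc k"] by (simp add: q_def)
  have "band_lo k \<le> base q" unfolding band_lo_def q_def by (rule base_mono) simp
  then have "band_lo k ^ k \<le> base q ^ k" by (rule power_mono) simp
  also have "\<dots> \<le> h_of q (base q)"
  proof (unfold h_of_def, rule power_increasing)
    have "q * 1 \<le> q * base q" using base_ge_2[of q] by (intro mult_le_mono2) simp
    with \<open>k \<le> q\<close> have "k \<le> q * base q" by linarith
    then show "k \<le> base q * (q + 1)" by (simp add: algebra_simps)
  qed (use base_ge_2[of q] in simp)
  also have "\<dots> \<le> band_hi k" using block_chain_base[of q] by (simp add: band_hi_def q_def)
  finally show ?thesis .
qed

lemma real_le_log_band: "real k \<le> log (band_lo k) (band_hi k)"
proof -
  note power_le = band_lo_power_le_band_hi[of k]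
  have "2 \<le> band_lo k" by (simp add: band_lo_def base_ge_2)
  then have "real k = log (band_lo k) (real (band_lo k) ^ k)" by (simp add: log_pow_cancel)
  also have "\<dots> \<le> log (band_lo k) (band_hi k)"
  proof (subst log_le_cancel_iff)
    have "0 < band_lo k ^ k" using \<open>2 \<le> band_lo k\<close> by simp
    then have "0 < band_hi k" using power_le by (rule less_le_trans)
    then show "0 < real (band_hi k)" by simp
    show "real (band_lo k) ^ k \<le> real (band_hi k)" using power_le by (simp flip: of_nat_power)
  qed (use \<open>2 \<le> band_lo k\<close> in auto)
  finally show ?thesis .
qed

lemma bounding_sequences_band: "bounding_sequences band_lo band_hi"
  unfolding bounding_sequences_def
proof (intro conjI allI)
  fix k
  show "2 \<le> band_lo k" by (simp add: band_lo_def base_ge_2)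
  show "2 \<le> band_hi k" using base_le_top base_ge_2 order_trans by (metis band_hi_def)
  show "band_lo k * band_hi k < band_lo (Suc k)" by (rule band_step)
next
  show "filterlim (\<lambda>k. log (band_lo k) (band_hi k)) at_top sequentially"
    by (rule filterlim_at_top_mono[OF filterlim_real_sequentially]) (simp add: real_le_log_band)
qed

section \<open>The family\<close>

definition fam_d :: "(nat \<Rightarrow> bool) \<Rightarrow> nat \<Rightarrow> nat" where
  "fam_d \<alpha> k = base (level \<alpha> k)"
definition fam_h :: "(nat \<Rightarrow> bool) \<Rightarrow> nat \<Rightarrow> nat" where
  "fam_h \<alpha> k = h_of (level \<alpha> k) (fam_d \<alpha> k)"
definition fam_g :: "(nat \<Rightarrow> bool) \<Rightarrow> nat \<Rightarrow> nat" where
  "fam_g \<alpha> k = g_of (level \<alpha> k) (fam_d \<alpha> k)"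
definition fam_b :: "(nat \<Rightarrow> bool) \<Rightarrow> nat \<Rightarrow> nat" where
  "fam_b \<alpha> k = b_of (level \<alpha> k) (fam_d \<alpha> k)"
definition fam_a :: "(nat \<Rightarrow> bool) \<Rightarrow> nat \<Rightarrow> nat" where
  "fam_a \<alpha> k = a_of (level \<alpha> k) (fam_d \<alpha> k)"
definition fam_c :: "(nat \<Rightarrow> bool) \<Rightarrow> nat \<Rightarrow> nat" where
  "fam_c \<alpha> k = c_of (level \<alpha> k) (fam_d \<alpha> k)"

text \<open>The summand k makes u strictly increasing and guarantees m < u (2^m), so that e_u is
  total and monotone.\<close>
definition fam_u :: "(nat \<Rightarrow> bool) \<Rightarrow> nat \<Rightarrow> nat" where
  "fam_u \<alpha> k = f_fun (fam_b \<alpha>) (fam_g \<alpha>) k + k"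
definition fam_e :: "(nat \<Rightarrow> bool) \<Rightarrow> nat \<Rightarrow> nat" where
  "fam_e \<alpha> = e_fun (fam_u \<alpha>)"

lemmas fam_defs = fam_d_def fam_h_def fam_g_def fam_b_def fam_a_def fam_c_def

lemma fam_chain:
  "fam_d \<alpha> k \<le> fam_h \<alpha> k" "fam_h \<alpha> k \<le> fam_g \<alpha> k" "fam_g \<alpha> k \<le> fam_b \<alpha> k"
  "fam_b \<alpha> k < fam_a \<alpha> k" "fam_a \<alpha> k \<le> fam_c \<alpha> k" "fam_h \<alpha> k < fam_c \<alpha> k"
  "fam_c \<alpha> k < u_of (level \<alpha> k) (fam_d \<alpha> k)"
  using block_chain_base[of "level \<alpha> k"] by (simp_all add: fam_defs)

lemma fam_d_ge_2: "2 \<le> fam_d \<alpha> k"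
  by (simp add: fam_d_def base_ge_2)

lemma fam_in_band:
  "fam_d \<alpha> k \<le> V \<Longrightarrow> V \<le> u_of (level \<alpha> k) (fam_d \<alpha> k) \<Longrightarrow> band_lo k \<le> V \<and> V \<le> band_hi k"
  unfolding fam_d_def by (rule block_in_band)

lemma fam_slalom_b:
  "2 ^ fam_g \<alpha> k \<le> slalom_count (fam_b \<alpha>) (fam_g \<alpha>) k"
  "slalom_count (fam_b \<alpha>) (fam_g \<alpha>) k \<le> fam_a \<alpha> k"
  using slalom_count_bounds[of "fam_g \<alpha>" k "fam_b \<alpha>"] fam_chain(3)[of \<alpha> k]
  by (simp_all add: fam_a_def fam_b_def a_of_def)

lemma fam_slalom_c:
  "2 ^ fam_h \<alpha> k \<le> slalom_count (fam_c \<alpha>) (fam_h \<alpha>) k"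
  "slalom_count (fam_c \<alpha>) (fam_h \<alpha>) k \<le> u_of (level \<alpha> k) (fam_d \<alpha> k)"
  using slalom_count_bounds[of "fam_h \<alpha>" k "fam_c \<alpha>"] fam_chain(6)[of \<alpha> k]
  by (simp_all add: fam_c_def u_of_def)

lemma fam_ratio: "real (fam_b \<alpha> k) / real (fam_g \<alpha> k) = real (fam_d \<alpha> k)"
proof -
  have "0 < fam_g \<alpha> k" using fam_chain(1,2)[of \<alpha> k] fam_d_ge_2[of \<alpha> k] by linarith
  then show ?thesis by (simp add: fam_b_def fam_g_def b_of_def)
qed

lemma fam_S1:
  "band_lo k \<le> fam_a \<alpha> k \<and> fam_a \<alpha> k \<le> band_hi k \<and>
   band_lo k \<le> fam_d \<alpha> k \<and> fam_d \<alpha> k \<le> band_hi k \<and>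
   band_lo k \<le> fam_b \<alpha> k \<and> fam_b \<alpha> k \<le> band_hi k \<and>
   band_lo k \<le> fam_g \<alpha> k \<and> fam_g \<alpha> k \<le> band_hi k \<and>
   band_lo k \<le> slalom_count (fam_b \<alpha>) (fam_g \<alpha>) k \<and>
   slalom_count (fam_b \<alpha>) (fam_g \<alpha>) k \<le> band_hi k \<and>
   real (band_lo k) \<le> real (fam_b \<alpha> k) / real (fam_g \<alpha> k) \<and>
   real (fam_b \<alpha> k) / real (fam_g \<alpha> k) \<le> real (band_hi k) \<and>
   band_lo k \<le> fam_h \<alpha> k \<and> fam_h \<alpha> k \<le> band_hi k \<and>
   band_lo k \<le> slalom_count (fam_c \<alpha>) (fam_h \<alpha>) k \<and>
   slalom_count (fam_c \<alpha>) (fam_h \<alpha>) k \<le> band_hi k"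
proof -
  note chain = fam_chain[of \<alpha> k] and band = fam_in_band[of \<alpha> k]
  have "fam_g \<alpha> k < 2 ^ fam_g \<alpha> k" "fam_h \<alpha> k < 2 ^ fam_h \<alpha> k" by (simp_all add: less_exp)
  with fam_slalom_b[of \<alpha> k] fam_slalom_c[of \<alpha> k] chain
  have "band_lo k \<le> slalom_count (fam_b \<alpha>) (fam_g \<alpha>) k \<and>
        slalom_count (fam_b \<alpha>) (fam_g \<alpha>) k \<le> band_hi k"
       "band_lo k \<le> slalom_count (fam_c \<alpha>) (fam_h \<alpha>) k \<and>
        slalom_count (fam_c \<alpha>) (fam_h \<alpha>) k \<le> band_hi k"
    by (intro band; linarith)+
  moreover have "band_lo k \<le> fam_d \<alpha> k \<and> fam_d \<alpha> k \<le> band_hi k"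
    "band_lo k \<le> fam_h \<alpha> k \<and> fam_h \<alpha> k \<le> band_hi k"
    "band_lo k \<le> fam_g \<alpha> k \<and> fam_g \<alpha> k \<le> band_hi k"
    "band_lo k \<le> fam_b \<alpha> k \<and> fam_b \<alpha> k \<le> band_hi k"
    "band_lo k \<le> fam_a \<alpha> k \<and> fam_a \<alpha> k \<le> band_hi k"
    using chain by (intro band; linarith)+
  ultimately show ?thesis unfolding fam_ratio of_nat_le_iff by blast
qed

lemma strict_mono_fam:
  "strict_mono (fam_a \<alpha>)" "strict_mono (fam_d \<alpha>)" "strict_mono (fam_b \<alpha>)"
  "strict_mono (fam_g \<alpha>)" "strict_mono (fam_h \<alpha>)" "strict_mono (fam_c \<alpha>)"
proof -
  show "strict_mono (fam_a \<alpha>)" "strict_mono (fam_d \<alpha>)" "strict_mono (fam_b \<alpha>)"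
    "strict_mono (fam_g \<alpha>)" "strict_mono (fam_h \<alpha>)"
    using fam_S1[of _ \<alpha>] by (auto intro!: strict_mono_in_band)
  show "strict_mono (fam_c \<alpha>)"
  proof (rule strict_mono_in_band)
    fix k
    show "band_lo k \<le> fam_c \<alpha> k \<and> fam_c \<alpha> k \<le> band_hi k"
      using fam_chain[of \<alpha> k] by (intro fam_in_band[of \<alpha>]) linarith+
  qed
qed

lemma fam_S2:
  "limsup (\<lambda>k. ereal (1 / real (fam_d \<alpha> k) * log (fam_d \<alpha> k) (fam_h \<alpha> k + 1))) = \<infinity>"
proof -
  define x where "x k = 1 / real (fam_d \<alpha> k) * log (fam_d \<alpha> k) (fam_h \<alpha> k + 1)" for k
  have "real k \<le> x k" for k
  proof -
    define N where "N = fam_d \<alpha> k"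
    define p where "p = level \<alpha> k"
    have "2 \<le> N" using fam_d_ge_2 N_def by simp
    have "real N * real (p + 1) = log N (fam_h \<alpha> k)"
      using \<open>2 \<le> N\<close> by (simp add: fam_h_def h_of_def log_pow_cancel N_def p_def algebra_simps)
    also have "\<dots> \<le> log N (fam_h \<alpha> k + 1)"
      using \<open>2 \<le> N\<close> fam_chain(1)[of \<alpha> k] by (subst log_le_cancel_iff) (auto simp: N_def)
    finally have "real (p + 1) \<le> x k"
      using \<open>2 \<le> N\<close> unfolding x_def N_def[symmetric] by (simp add: field_simps)
    moreover have "k \<le> p" using less_level[of k \<alpha>] p_def by simp
    ultimately show ?thesis by simp
  qed
  then have "filterlim x at_top sequentially"
    by (intro filterlim_at_top_mono[OF filterlim_real_sequentially]) simp
  then have "(\<lambda>k. ereal (x k)) \<longlonglongrightarrow> \<infinity>" by (simp add: tendsto_PInfty_eq_at_top)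
  then have "liminf (\<lambda>k. ereal (x k)) = \<infinity>" by (simp add: liminf_PInfty)
  with Liminf_le_Limsup[of sequentially "\<lambda>k. ereal (x k)"] show ?thesis
    unfolding x_def by simp
qed

lemma fam_S7:
  assumes "\<alpha> \<noteq> \<beta>"
  shows "(\<lambda>k. min (real (slalom_count (fam_c \<beta>) (fam_h \<beta>) k) / real (fam_d \<alpha> k))
                 (real (fam_a \<alpha> k) / real (fam_d \<beta> k))) \<longlonglongrightarrow> 0"
    (is "?m \<longlonglongrightarrow> 0")
proof (rule tendsto_sandwich[OF _ _ tendsto_const LIMSEQ_inverse_real_of_nat])
  obtain i where "\<alpha> i \<noteq> \<beta> i" using assms by blast
  show "eventually (\<lambda>k. ?m k \<le> inverse (real (Suc k))) sequentially"
  proof (rule eventually_sequentiallyI[of "Suc i"])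
    fix k assume "Suc i \<le> k"
    then have "level \<alpha> k \<noteq> level \<beta> k" using level_neq \<open>\<alpha> i \<noteq> \<beta> i\<close> by simp
    then consider "level \<alpha> k < level \<beta> k" | "level \<beta> k < level \<alpha> k" by linarith
    then show "?m k \<le> inverse (real (Suc k))"
    proof cases
      case 1
      have "real (fam_a \<alpha> k) / real (fam_d \<beta> k)
            \<le> real (u_of (level \<alpha> k) (base (level \<alpha> k))) / real (base (level \<beta> k))"
        using fam_chain(5,7)[of \<alpha> k] unfolding fam_d_def by (intro divide_right_mono) simp_all
      also have "\<dots> \<le> inverse (real (Suc k))"
        using 1 less_level[of k \<alpha>] by (intro top_div_base_le) auto
      finally show ?thesis by linarith
    next
      case 2
      have "real (slalom_count (fam_c \<beta>) (fam_h \<beta>) k) / real (fam_d \<alpha> k)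
            \<le> real (u_of (level \<beta> k) (base (level \<beta> k))) / real (base (level \<alpha> k))"
        using fam_slalom_c(2)[of \<beta> k] unfolding fam_d_def by (intro divide_right_mono) simp_all
      also have "\<dots> \<le> inverse (real (Suc k))"
        using 2 less_level[of k \<beta>] by (intro top_div_base_le) auto
      finally show ?thesis by linarith
    qed
  qed
qed simp

lemma fam_positive: "0 < fam_h \<alpha> k" "0 < fam_g \<alpha> k" "0 < fam_b \<alpha> k"
  using fam_chain(1-3)[of \<alpha> k] fam_d_ge_2[of \<alpha> k] by linarith+

lemma strict_mono_fam_u: "strict_mono (fam_u \<alpha>)"
  using f_fun_mono[of "fam_g \<alpha>" "fam_b \<alpha>", OF fam_positive(2)]
  by (intro strict_monoI) (simp add: fam_u_def mono_def add_le_less_mono)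

lemma mono_fam_e: "mono (fam_e \<alpha>)"
  unfolding fam_e_def by (rule mono_e_fun) (simp add: fam_u_def)

lemma sq_less_fam_g: "k ^ 2 < fam_g \<alpha> (interval_index (fam_h \<alpha>) k)"
proof -
  define n where "n = interval_index (fam_h \<alpha>) k"
  have "k < (\<Sum>i\<le>n. fam_h \<alpha> i)"
    unfolding n_def by (rule less_sum_interval_index[OF fam_positive(1)])
  also have "\<dots> \<le> (n + 1) * fam_h \<alpha> n"
    by (rule sum_atMost_le_mult_last[OF strict_mono_mono[OF strict_mono_fam(5)]])
  also have "\<dots> \<le> (level \<alpha> n + 1) * fam_h \<alpha> n"
    using less_level[of n \<alpha>] by (intro mult_le_mono1) simp
  finally have "k ^ 2 < ((level \<alpha> n + 1) * fam_h \<alpha> n) ^ 2" by (simp add: power_strict_mono)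
  then show ?thesis by (simp add: n_def fam_g_def fam_h_def g_of_def)
qed

lemma fam_u_sq_le_c_exp:
  fixes \<alpha> :: "nat \<Rightarrow> bool" and k :: nat
  defines "n \<equiv> interval_index (fam_h \<alpha>) k"
  shows "fam_u \<alpha> (k ^ 2) \<le> c_exp (level \<alpha> n) (fam_d \<alpha> n)"
proof -
  have "interval_index (fam_g \<alpha>) (k ^ 2) \<le> n"
    using sq_less_fam_g[of k \<alpha>] member_le_sum[of n "{..n}" "fam_g \<alpha>"]
    unfolding n_def by (intro interval_index_le) auto
  then have "f_fun (fam_b \<alpha>) (fam_g \<alpha>) (k ^ 2) \<le> (\<Sum>l\<le>n. nat \<lceil>log 2 (fam_b \<alpha> l)\<rceil>)"
    unfolding f_fun_def by (intro sum_mono2) auto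
  also have "\<dots> \<le> (\<Sum>l\<le>n. fam_b \<alpha> l)"
    using fam_positive(3) by (intro sum_mono nat_ceiling_log2_le) (simp add: Suc_le_eq)
  also have "\<dots> \<le> (n + 1) * fam_b \<alpha> n"
    by (rule sum_atMost_le_mult_last[OF strict_mono_mono[OF strict_mono_fam(3)]])
  also have "\<dots> \<le> (level \<alpha> n + 1) * fam_b \<alpha> n"
    using less_level[of n \<alpha>] by (intro mult_le_mono1) simp
  finally show ?thesis
    using sq_less_fam_g[of k \<alpha>]
    by (simp add: fam_u_def c_exp_def fam_b_def fam_g_def n_def)
qed

lemma g_fun_fam:
  "g_fun (fam_c \<alpha>) (fam_h \<alpha>) k =
     c_exp (level \<alpha> (interval_index (fam_h \<alpha>) k)) (fam_d \<alpha> (interval_index (fam_h \<alpha>) k))"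
  by (simp add: g_fun_def fam_c_def c_of_def log_pow_cancel)

lemma fam_MS2:
  assumes "1 \<le> k"
  shows "2 * log 2 (real k) \<le> real (fam_e \<alpha> (g_fun (fam_c \<alpha>) (fam_h \<alpha>) k))"
proof -
  define m where "m = fam_e \<alpha> (g_fun (fam_c \<alpha>) (fam_h \<alpha>) k)"
  have "fam_u \<alpha> (k ^ 2) \<le> g_fun (fam_c \<alpha>) (fam_h \<alpha>) k"
    unfolding g_fun_fam by (rule fam_u_sq_le_c_exp)
  also have "\<dots> < fam_u \<alpha> (2 ^ m)"
    unfolding m_def fam_e_def by (rule less_e_fun) (simp add: fam_u_def)
  finally have "k ^ 2 < 2 ^ m" using strict_mono_fam_u strict_mono_less by blast
  then have "real k ^ 2 < 2 ^ m" by (metis of_nat_less_iff of_nat_numeral of_nat_power)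
  then have "log 2 (real k ^ 2) < log 2 (2 ^ m)"
    using assms by (subst log_less_cancel_iff) auto
  then show ?thesis using assms by (simp add: log_nat_power log_pow_cancel m_def)
qed

lemma inj_fam_d: "inj fam_d"
proof (rule injI, rule ccontr)
  fix \<alpha> \<beta> assume "fam_d \<alpha> = fam_d \<beta>" "\<alpha> \<noteq> \<beta>"
  then obtain i where "\<alpha> i \<noteq> \<beta> i" by blast
  have "base (level \<alpha> (Suc i)) = base (level \<beta> (Suc i))"
    using \<open>fam_d \<alpha> = fam_d \<beta>\<close> unfolding fam_d_def by metis
  then have "level \<alpha> (Suc i) = level \<beta> (Suc i)" using strict_mono_base strict_mono_eq by metis
  with level_neq[of \<alpha> i \<beta> "Suc i"] \<open>\<alpha> i \<noteq> \<beta> i\<close> show False by simp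
qed

theorem proposition6p7:
  shows "\<exists>(nm :: nat \<Rightarrow> nat) (np :: nat \<Rightarrow> nat)
            (a :: (nat \<Rightarrow> bool) \<Rightarrow> nat \<Rightarrow> nat) d b g c h e u.
           bounding_sequences nm np \<and>
           mod_suitable_family nm np (UNIV :: (nat \<Rightarrow> bool) set) a d b g c h e u \<and>
           inj (\<lambda>\<alpha>. (a \<alpha>, d \<alpha>, b \<alpha>, g \<alpha>, c \<alpha>, h \<alpha>, e \<alpha>, u \<alpha>))"
proof (intro exI conjI)
  show "bounding_sequences band_lo band_hi" by (rule bounding_sequences_band)
  show "mod_suitable_family band_lo band_hi UNIV fam_a fam_d fam_b fam_g fam_c fam_h fam_e fam_u"
    unfolding mod_suitable_family_def
    using strict_mono_fam strict_mono_fam_u mono_fam_e fam_S1 fam_chain(6) fam_S2 fam_ratio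
      fam_slalom_b(2) fam_S7 fam_MS2
    by (simp add: fam_e_def fam_u_def)
  show "inj (\<lambda>\<alpha>. (fam_a \<alpha>, fam_d \<alpha>, fam_b \<alpha>, fam_g \<alpha>, fam_c \<alpha>, fam_h \<alpha>, fam_e \<alpha>, fam_u \<alpha>))"
    using inj_fam_d by (auto simp: inj_def)
qed

end
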